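(* For every $1$-Sperner hypergraph ${\cal H}=(V,{\cal E})$ with ${\cal E}\neq\{\emptyset\}$, the characteristic vectors $\chi^e\in\mathbb{R}^V$ ($e\in{\cal E}$) of its hyperedges are linearly independent.
   Context: A hypergraph ${\cal H}=(V,{\cal E})$ consists of a finite vertex set $V$ and a set ${\cal E}$ of subsets of $V$. It is $1$-Sperner if every two distinct hyperedges $e,f$ satisfy $\min\{|e\setminus f|,|f\setminus e|\}=1$. The characteristic vector $\chi^e\in\{0,1\}^V$ of $e$ has $\chi^e_v=1$ iff $v\in e$. *)

theory Defs
  imports Main "HOL-Library.Indicator_Function"
begin

definition hypergraph :: "'a set \<Rightarrow> 'a set set \<Rightarrow> bool" where
  "hypergraph V E \<longleftrightarrow> finite V \<and> (\<forall>e\<in>E. e \<subseteq> V)"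

definition one_sperner :: "'a set set \<Rightarrow> bool" where
  "one_sperner E \<longleftrightarrow>
     (\<forall>e\<in>E. \<forall>f\<in>E. e \<noteq> f \<longrightarrow> min (card (e - f)) (card (f - e)) = 1)"

definition char_vec :: "'a set \<Rightarrow> 'a \<Rightarrow> real" where
  "char_vec e v = (if v \<in> e then 1 else 0)"

definition lin_indep_family :: "'a set \<Rightarrow> 'i set \<Rightarrow> ('i \<Rightarrow> 'a \<Rightarrow> real) \<Rightarrow> bool" where
  "lin_indep_family V I x \<longleftrightarrow>
     (\<forall>c :: 'i \<Rightarrow> real. (\<forall>v\<in>V. (\<Sum>i\<in>I. c i * x i v) = 0) \<longrightarrow> (\<forall>i\<in>I. c i = 0))"

end

theory Submission
  imports Defs
begin

text \<open>
  We prove more: for every \<open>m \<ge> 0\<close> the shifted vectors \<open>\<chi>\<^sup>e + m\<close> are independent on the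
  union of the hyperedges, by induction on the number of hyperedges. In a relation
  \<open>\<Sum> c\<^sub>e (\<chi>\<^sup>e + m) = 0\<close> let \<open>e\<^sub>0\<close> be a smallest hyperedge. The 1-Sperner condition forces
  \<open>|e\<^sub>0 - f| = 1\<close> for every other \<open>f\<close>, and summing the relation over \<open>e\<^sub>0\<close> determines
  \<open>c\<^sub>e\<^sub>0\<close> as a multiple of \<open>s = \<Sum> c\<^sub>e\<close>. If \<open>s = 0\<close>, then \<open>c\<^sub>e\<^sub>0 = 0\<close> and \<open>e\<^sub>0\<close> can be dropped.
  Otherwise pick \<open>f\<^sub>1 \<noteq> e\<^sub>0\<close> with \<open>|f\<^sub>1 - e\<^sub>0|\<close> minimal and let \<open>e\<^sub>0 - f\<^sub>1 = {u}\<close>. The hyperedges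
  \<open>f \<noteq> e\<^sub>0\<close> missing \<open>u\<close> all meet \<open>e\<^sub>0\<close> in \<open>e\<^sub>0 - {u}\<close>, so their parts \<open>f - e\<^sub>0\<close> again form a
  1-Sperner family, and every remaining hyperedge contains all these parts. Restricted to
  them the relation becomes a shifted relation of the same kind with a new shift
  \<open>m' \<ge> 0\<close> and total weight \<open>(1 + m) s\<close>, which by induction vanishes: a contradiction.
\<close>

definition one_sperner_on :: "'i set \<Rightarrow> ('i \<Rightarrow> 'a set) \<Rightarrow> bool" where
  "one_sperner_on I A \<longleftrightarrow>
     (\<forall>i\<in>I. \<forall>j\<in>I. i \<noteq> j \<longrightarrow> min (card (A i - A j)) (card (A j - A i)) = 1)"

lemma one_sperner_iff_one_sperner_on: "one_sperner E \<longleftrightarrow> one_sperner_on E (\<lambda>e. e)"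
  by (simp add: one_sperner_def one_sperner_on_def)

lemma one_sperner_onD:
  "one_sperner_on I A \<Longrightarrow> i \<in> I \<Longrightarrow> j \<in> I \<Longrightarrow> i \<noteq> j \<Longrightarrow> min (card (A i - A j)) (card (A j - A i)) = 1"
  unfolding one_sperner_on_def by blast

lemma one_sperner_on_subset: "one_sperner_on I A \<Longrightarrow> J \<subseteq> I \<Longrightarrow> one_sperner_on J A"
  unfolding one_sperner_on_def by blast

lemma lin_indep_family_mono: "lin_indep_family V I x \<Longrightarrow> V \<subseteq> W \<Longrightarrow> lin_indep_family W I x"
  unfolding lin_indep_family_def by blast

lemma sum_char_vec: "finite e \<Longrightarrow> (\<Sum>u\<in>e. char_vec A u) = real (card (e \<inter> A))"
  by (simp add: char_vec_def sum.If_cases Int_def)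

lemma card_eq_1_member: "card X = 1 \<Longrightarrow> x \<in> X \<Longrightarrow> X = {x}"
  by (metis card_1_singletonE singletonD)

lemma obtain_least_nat_on:
  fixes f :: "'i \<Rightarrow> nat"
  assumes "J \<noteq> {}"
  obtains i where "i \<in> J" "\<And>j. j \<in> J \<Longrightarrow> f i \<le> f j"
proof -
  from assms obtain k where "k \<in> J" by blast
  from ex_has_least_nat[of "\<lambda>i. i \<in> J" k f, OF this] that show ?thesis by blast
qed

lemma card_Diff_le_card_Diff:
  assumes "finite e" "finite f" "card e \<le> card f"
  shows "card (e - f) \<le> card (f - e)"
  using card_Int_Diff[OF assms(1), of f] card_Int_Diff[OF assms(2), of e] assms(3)
  by (simp add: Int_commute)

lemma one_sperner_pair_nested:
  assumes "e - A = {u}" "e - B = {w}" "u \<noteq> w"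
    and "min (card (A - B)) (card (B - A)) = 1"
  shows "A - e \<subseteq> B \<or> B - e \<subseteq> A"
proof -
  have w: "w \<in> A - B" and u: "u \<in> B - A"
    using assms(1-3) by auto
  have "card (A - B) = 1 \<or> card (B - A) = 1"
    using assms(4) by (simp add: min_def split: if_splits)
  then show ?thesis
  proof
    assume "card (A - B) = 1"
    with w have "A - B = {w}" by (rule card_eq_1_member[rotated])
    with assms(2) show ?thesis by auto
  next
    assume "card (B - A) = 1"
    with u have "B - A = {u}" by (rule card_eq_1_member[rotated])
    with assms(1) show ?thesis by auto
  qed
qed

lemma one_sperner_pair_not_subset:
  assumes "A \<inter> e \<subseteq> B" "min (card (A - B)) (card (B - A)) = 1"
  shows "\<not> A - e \<subseteq> B"
proof
  assume "A - e \<subseteq> B"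
  with assms(1) have "A - B = {}" by blast
  with assms(2) show False by simp
qed

lemma outer_part_subset:
  assumes sperner: "one_sperner_on J A"
    and one_missing: "\<And>j. j \<in> J \<Longrightarrow> card (e - A j) = 1"
    and fmin: "fmin \<in> J" "u \<in> e" "u \<notin> A fmin" "finite (A fmin)"
    and fmin_min: "\<And>j. j \<in> J \<Longrightarrow> card (A fmin - e) \<le> card (A j - e)"
    and b: "b \<in> J" "u \<notin> A b"
    and f: "f \<in> J" "u \<in> A f"
  shows "A b - e \<subseteq> A f"
proof -
  have missing: "e - A j = {u}" if "j \<in> J" "u \<notin> A j" for j
    by (rule card_eq_1_member[OF one_missing[OF that(1)]]) (use that(2) \<open>u \<in> e\<close> in auto)
  obtain w where w: "e - A f = {w}"
    using one_missing[OF f(1)] by (rule card_1_singletonE)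
  with f(2) have "u \<noteq> w" by auto
  have nested: "A j - e \<subseteq> A f \<or> A f - e \<subseteq> A j" if "j \<in> J" "u \<notin> A j" for j
  proof (rule one_sperner_pair_nested[OF missing[OF that] w \<open>u \<noteq> w\<close>])
    show "min (card (A j - A f)) (card (A f - A j)) = 1"
      by (rule one_sperner_onD[OF sperner that(1) f(1)]) (use that(2) f(2) in auto)
  qed
  have fmin_f: "A fmin - e \<subseteq> A f"
  proof (rule ccontr)
    assume not_sub: "\<not> A fmin - e \<subseteq> A f"
    then have sub: "A f - e \<subseteq> A fmin - e"
      using nested[OF fmin(1,3)] by blast
    have fin: "finite (A fmin - e)"
      using fmin(4) by simp
    have "card (A f - e) = card (A fmin - e)"
      using card_mono[OF fin sub] fmin_min[OF f(1)] by linarith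
    then have "A f - e = A fmin - e"
      by (rule card_subset_eq[OF fin sub])
    with not_sub show False by blast
  qed
  show ?thesis
  proof (cases "b = fmin")
    case False
    have "\<not> A fmin - e \<subseteq> A b"
    proof (rule one_sperner_pair_not_subset)
      show "A fmin \<inter> e \<subseteq> A b"
        using missing[OF fmin(1,3)] missing[OF b] by auto
      show "min (card (A fmin - A b)) (card (A b - A fmin)) = 1"
        by (rule one_sperner_onD[OF sperner fmin(1) b(1)]) (use False in simp)
    qed
    then show ?thesis
      using nested[OF b] fmin_f by blast
  qed (use fmin_f in simp)
qed

locale shifted_relation =
  fixes I :: "'i set" and A :: "'i \<Rightarrow> 'a set" and m :: real and c :: "'i \<Rightarrow> real"
  assumes finite_I: "finite I"
    and finite_A: "\<And>i. i \<in> I \<Longrightarrow> finite (A i)"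
    and nonempty_A: "\<And>i. i \<in> I \<Longrightarrow> A i \<noteq> {}"
    and sperner: "one_sperner_on I A"
    and shift_nonneg: "0 \<le> m"
    and relation: "\<And>x. x \<in> (\<Union>i\<in>I. A i) \<Longrightarrow> (\<Sum>i\<in>I. c i * (char_vec (A i) x + m)) = 0"
begin

lemma relation_value:
  assumes "i \<in> I" "x \<in> A i"
  shows "(\<Sum>j\<in>I. c j * char_vec (A j) x) = - m * sum c I"
proof -
  have "(\<Sum>j\<in>I. c j * (char_vec (A j) x + m)) = (\<Sum>j\<in>I. c j * char_vec (A j) x) + m * sum c I"
    by (simp add: distrib_left sum.distrib sum_distrib_left mult.commute)
  moreover have "(\<Sum>j\<in>I. c j * (char_vec (A j) x + m)) = 0"
    using relation assms by blast
  ultimately show ?thesis by linarith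
qed

lemma remove_zero_coeff:
  assumes "i \<in> I" "c i = 0"
  shows "shifted_relation (I - {i}) A m c"
proof
  fix x assume "x \<in> (\<Union>j\<in>I - {i}. A j)"
  then have "(\<Sum>j\<in>I. c j * (char_vec (A j) x + m)) = 0"
    by (intro relation) blast
  with assms show "(\<Sum>j\<in>I - {i}. c j * (char_vec (A j) x + m)) = 0"
    by (simp add: sum.remove[OF finite_I])
qed (use finite_I finite_A nonempty_A shift_nonneg one_sperner_on_subset[OF sperner] in auto)

end

locale min_edge = shifted_relation +
  fixes i0
  assumes i0_in: "i0 \<in> I"
    and i0_min: "\<And>j. j \<in> I \<Longrightarrow> card (A i0) \<le> card (A j)"
begin

lemma card_min_edge_Diff:
  assumes "j \<in> I - {i0}"
  shows "card (A i0 - A j) = 1"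
proof -
  have "card (A i0 - A j) \<le> card (A j - A i0)"
    using assms finite_A i0_in i0_min by (intro card_Diff_le_card_Diff) auto
  moreover have "min (card (A i0 - A j)) (card (A j - A i0)) = 1"
    using one_sperner_onD[OF sperner i0_in] assms by auto
  ultimately show ?thesis by simp
qed

lemma card_min_edge: "1 \<le> card (A i0)"
  using finite_A[OF i0_in] nonempty_A[OF i0_in] by (simp add: Suc_le_eq card_gt_0_iff)

lemma coeff_min_edge: "c i0 = (1 - real (card (A i0)) * (1 + m)) * sum c I"
proof -
  define e0 k where "e0 = A i0" and "k = card (A i0)"
  have trace: "c j * real (card (e0 \<inter> A j)) = c j * (real k - 1) + (if j = i0 then c j else 0)"
    if "j \<in> I" for j
  proof (cases "j = i0")
    case False
    then have "card e0 = card (e0 \<inter> A j) + 1"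
      using card_Int_Diff[OF finite_A[OF i0_in], of "A j"] card_min_edge_Diff[of j] that
      by (simp add: e0_def)
    with False show ?thesis by (simp add: k_def e0_def algebra_simps)
  qed (simp add: e0_def k_def algebra_simps)
  have "real k * (- m * sum c I) = (\<Sum>x\<in>e0. \<Sum>j\<in>I. c j * char_vec (A j) x)"
    using relation_value[OF i0_in] by (simp add: e0_def k_def)
  also have "\<dots> = (\<Sum>j\<in>I. c j * real (card (e0 \<inter> A j)))"
    using finite_A[OF i0_in]
    by (subst sum.swap) (simp add: sum_distrib_left[symmetric] sum_char_vec e0_def)
  also have "\<dots> = (real k - 1) * sum c I + c i0"
    using trace i0_in finite_I by (simp add: sum.distrib sum_distrib_right mult.commute)
  finally show ?thesis by (simp add: k_def algebra_simps)
qed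

lemma other_edges_if_sum_nonzero:
  assumes "sum c I \<noteq> 0"
  shows "I - {i0} \<noteq> {}"
proof
  assume "I - {i0} = {}"
  then have "I = {i0}"
    using i0_in by blast
  then have "sum c I = c i0"
    by simp
  then have "real (card (A i0)) * (1 + m) * sum c I = 0"
    using coeff_min_edge by (simp add: algebra_simps)
  with card_min_edge shift_nonneg assms show False by simp
qed

end

locale split_edge = min_edge +
  fixes f1 u
  assumes f1_in: "f1 \<in> I - {i0}"
    and f1_min: "\<And>j. j \<in> I - {i0} \<Longrightarrow> card (A f1 - A i0) \<le> card (A j - A i0)"
    and u_missing: "A i0 - A f1 = {u}"
begin

definition B where
  "B = {j \<in> I - {i0}. u \<notin> A j}"

lemma B_subset: "B \<subseteq> I - {i0}"
  by (auto simp: B_def)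

lemma trace_B: "j \<in> B \<Longrightarrow> A j \<inter> A i0 = A i0 - {u}"
  using card_eq_1_member[OF card_min_edge_Diff, of j u] u_missing by (auto simp: B_def)

lemma outer_B_subset:
  assumes "b \<in> B" "f \<in> I - {i0} - B"
  shows "A b - A i0 \<subseteq> A f"
proof (rule outer_part_subset[where J = "I - {i0}" and e = "A i0" and fmin = f1 and u = u])
  show "one_sperner_on (I - {i0}) A"
    using one_sperner_on_subset[OF sperner] by blast
  show "u \<in> A i0" "u \<notin> A f1"
    using u_missing by auto
  show "\<And>j. j \<in> I - {i0} \<Longrightarrow> card (A i0 - A j) = 1"
    by (rule card_min_edge_Diff)
  show "\<And>j. j \<in> I - {i0} \<Longrightarrow> card (A f1 - A i0) \<le> card (A j - A i0)"
    by (rule f1_min)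
  show "f1 \<in> I - {i0}" "finite (A f1)"
    using f1_in finite_A by auto
  show "b \<in> I - {i0}" "u \<notin> A b" "f \<in> I - {i0}" "u \<in> A f"
    using assms by (auto simp: B_def)
qed

lemma sum_B: "sum c B = (1 + m) * sum c I"
proof -
  have u: "u \<in> A i0" using u_missing by auto
  have "char_vec (A j) u = (if j \<in> B then 0 else 1)" if "j \<in> I" for j
    using that u by (auto simp: char_vec_def B_def)
  then have "(\<Sum>j\<in>I. c j * char_vec (A j) u) = (\<Sum>j\<in>I. if j \<in> I - B then c j else 0)"
    by (intro sum.cong) auto
  also have "\<dots> = sum c (I - B)"
    using sum.inter_restrict[OF finite_I, of c "I - B"] by (simp add: Int_absorb1)
  also have "\<dots> = sum c I - sum c B"
    using B_subset finite_I by (subst sum_diff) auto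
  finally show ?thesis
    using relation_value[OF i0_in u] by (simp add: algebra_simps)
qed

lemma outer_combination:
  assumes b: "b \<in> B" "x \<in> A b - A i0"
  shows "(\<Sum>j\<in>B. c j * char_vec (A j - A i0) x) = c i0"
proof -
  have bI: "b \<in> I" using b(1) B_subset by blast
  have outer: "char_vec (A j) x = char_vec (A j - A i0) x" for j
    using b(2) by (simp add: char_vec_def)
  have in_rest: "char_vec (A j - A i0) x = 1" if "j \<in> I - B - {i0}" for j
    using outer_B_subset[OF b(1), of j] that b(2) by (auto simp: char_vec_def)
  have "(\<Sum>j\<in>I - B. c j * char_vec (A j - A i0) x) = (\<Sum>j\<in>I - B - {i0}. c j * char_vec (A j - A i0) x)"
    using sum.remove[of "I - B" i0 "\<lambda>j. c j * char_vec (A j - A i0) x"] i0_in B_subset finite_I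
    by (auto simp: char_vec_def)
  also have "\<dots> = sum c (I - B - {i0})"
    by (rule sum.cong) (simp_all add: in_rest)
  also have "\<dots> = sum c I - sum c B - c i0"
  proof -
    have "sum c I = sum c (I - B) + sum c B"
      using B_subset finite_I by (intro sum.subset_diff) auto
    moreover have "sum c (I - B) = c i0 + sum c (I - B - {i0})"
      using i0_in B_subset finite_I by (intro sum.remove) auto
    ultimately show ?thesis by simp
  qed
  finally have rest: "(\<Sum>j\<in>I - B. c j * char_vec (A j - A i0) x) = sum c I - sum c B - c i0" .
  have "(\<Sum>j\<in>I. c j * char_vec (A j - A i0) x) =
      (\<Sum>j\<in>I - B. c j * char_vec (A j - A i0) x) + (\<Sum>j\<in>B. c j * char_vec (A j - A i0) x)"
    using B_subset finite_I by (intro sum.subset_diff) auto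
  moreover have "(\<Sum>j\<in>I. c j * char_vec (A j - A i0) x) = - m * sum c I"
    using relation_value[OF bI, of x] b(2) by (simp add: outer)
  ultimately have "(\<Sum>j\<in>B. c j * char_vec (A j - A i0) x) = - m * sum c I - (sum c I - sum c B - c i0)"
    using rest by linarith
  also have "\<dots> = c i0"
    using sum_B by (simp add: algebra_simps)
  finally show ?thesis .
qed

lemma outer_parts_nonempty:
  assumes "j \<in> B"
  shows "A j - A i0 \<noteq> {}"
proof
  assume "A j - A i0 = {}"
  then have "A j \<subset> A i0"
    using trace_B[OF assms] u_missing by auto
  then have "card (A j) < card (A i0)"
    by (rule psubset_card_mono[OF finite_A[OF i0_in]])
  with i0_min assms B_subset show False by force
qed

lemma outer_parts_one_sperner: "one_sperner_on B (\<lambda>j. A j - A i0)"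
  unfolding one_sperner_on_def
proof (intro ballI impI)
  fix i j assume ij: "i \<in> B" "j \<in> B" "i \<noteq> j"
  then have "A i - A j = (A i - A i0) - (A j - A i0)" "A j - A i = (A j - A i0) - (A i - A i0)"
    using trace_B by auto
  moreover have "min (card (A i - A j)) (card (A j - A i)) = 1"
    using one_sperner_onD[OF sperner] ij B_subset by blast
  ultimately show "min (card ((A i - A i0) - (A j - A i0))) (card ((A j - A i0) - (A i - A i0))) = 1"
    by simp
qed

text \<open>The new shift is forced by \<open>c i0 = - m' * sum c B\<close>.\<close>
lemma reduced_relation:
  "shifted_relation B (\<lambda>j. A j - A i0) ((real (card (A i0)) * (1 + m) - 1) / (1 + m)) c"
  (is "shifted_relation _ _ ?m' _")
proof
  show "finite B"
    using B_subset finite_I finite_subset by blast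
  show "finite (A j - A i0)" if "j \<in> B" for j
    using that B_subset finite_A by blast
  show "A j - A i0 \<noteq> {}" if "j \<in> B" for j
    using that by (rule outer_parts_nonempty)
  show "one_sperner_on B (\<lambda>j. A j - A i0)"
    by (rule outer_parts_one_sperner)
  have "1 * 1 \<le> real (card (A i0)) * (1 + m)"
    using card_min_edge shift_nonneg by (intro mult_mono) auto
  then show "0 \<le> ?m'"
    using shift_nonneg by simp
next
  fix x assume "x \<in> (\<Union>j\<in>B. A j - A i0)"
  then have "(\<Sum>j\<in>B. c j * char_vec (A j - A i0) x) = c i0"
    using outer_combination by blast
  then have "(\<Sum>j\<in>B. c j * (char_vec (A j - A i0) x + ?m')) = c i0 + sum c B * ?m'"
    by (simp add: distrib_left sum.distrib sum_distrib_right sum_divide_distrib)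
  also have "\<dots> = c i0 + (real (card (A i0)) * (1 + m) - 1) * sum c I"
    using sum_B shift_nonneg by (simp add: field_simps)
  also have "\<dots> = 0"
    using coeff_min_edge by (simp add: algebra_simps)
  finally show "(\<Sum>j\<in>B. c j * (char_vec (A j - A i0) x + ?m')) = 0" .
qed

end

context min_edge
begin

lemma reduced_family_if_sum_nonzero:
  assumes "sum c I \<noteq> 0"
  obtains J m' where "J \<subset> I" "shifted_relation J (\<lambda>j. A j - A i0) m' c" "sum c J = (1 + m) * sum c I"
proof -
  obtain f1 where f1: "f1 \<in> I - {i0}" "\<And>j. j \<in> I - {i0} \<Longrightarrow> card (A f1 - A i0) \<le> card (A j - A i0)"
    using obtain_least_nat_on[OF other_edges_if_sum_nonzero[OF assms], of "\<lambda>j. card (A j - A i0)"]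
    by blast
  obtain u where u: "A i0 - A f1 = {u}"
    using card_min_edge_Diff[OF f1(1)] by (rule card_1_singletonE)
  have "split_edge I A m c i0 f1 u"
    by (intro split_edge.intro min_edge_axioms split_edge_axioms.intro f1 u)
  then interpret split_edge I A m c i0 f1 u .
  have "B \<subset> I"
    using B_subset i0_in by blast
  from that[OF this reduced_relation sum_B] show ?thesis .
qed

end

theorem shifted_relation_coeffs_zero: "shifted_relation I A m c \<Longrightarrow> \<forall>i\<in>I. c i = 0"
proof (induction "card I" arbitrary: I A m rule: less_induct)
  case less
  interpret shifted_relation I A m c by (fact less.prems)
  show ?case
  proof (cases "I = {}")
    case False
    then obtain i0 where "i0 \<in> I" "\<And>j. j \<in> I \<Longrightarrow> card (A i0) \<le> card (A j)"
      using obtain_least_nat_on[of I "\<lambda>j. card (A j)"] by blast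
    then have "min_edge I A m c i0"
      by (intro min_edge.intro less.prems min_edge_axioms.intro)
    then interpret min_edge I A m c i0 .
    show ?thesis
    proof (cases "sum c I = 0")
      case True
      then have "c i0 = 0" using coeff_min_edge by simp
      moreover have "\<forall>j\<in>I - {i0}. c j = 0"
        using less.hyps[OF card_Diff1_less[OF finite_I i0_in] remove_zero_coeff[OF i0_in]] \<open>c i0 = 0\<close> .
      ultimately show ?thesis by blast
    next
      case False
      then obtain J m' where J: "J \<subset> I" "shifted_relation J (\<lambda>j. A j - A i0) m' c"
          and sum_J: "sum c J = (1 + m) * sum c I"
        by (rule reduced_family_if_sum_nonzero)
      have "\<forall>j\<in>J. c j = 0"
        using less.hyps[OF psubset_card_mono[OF finite_I J(1)] J(2)] .
      then have "sum c J = 0"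
        by simp
      with sum_J False shift_nonneg show ?thesis by simp
    qed
  qed simp
qed

lemma lin_indep_shifted_char_vecs:
  assumes "finite I" "\<And>i. i \<in> I \<Longrightarrow> finite (A i)" "\<And>i. i \<in> I \<Longrightarrow> A i \<noteq> {}"
    and "one_sperner_on I A" "0 \<le> m"
  shows "lin_indep_family (\<Union>i\<in>I. A i) I (\<lambda>i x. char_vec (A i) x + m)"
  unfolding lin_indep_family_def
proof (intro allI impI)
  fix c assume "\<forall>x\<in>\<Union>i\<in>I. A i. (\<Sum>i\<in>I. c i * (char_vec (A i) x + m)) = 0"
  with assms have "shifted_relation I A m c"
    by unfold_locales auto
  then show "\<forall>i\<in>I. c i = 0"
    by (rule shifted_relation_coeffs_zero)
qed

theorem proposition15:
  fixes V :: "'a set" and E :: "'a set set"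
  assumes "hypergraph V E"
    and "one_sperner E"
    and "E \<noteq> {{}}"
  shows "lin_indep_family V E char_vec"
proof -
  have "finite V" and edges_in_V: "\<forall>e\<in>E. e \<subseteq> V"
    using assms(1) by (auto simp: hypergraph_def)
  have "finite E"
    using edges_in_V \<open>finite V\<close> by (intro finite_subset[of E "Pow V"]) auto
  have finite_edge: "\<And>e. e \<in> E \<Longrightarrow> finite e"
    using edges_in_V \<open>finite V\<close> finite_subset by blast
  have "{} \<notin> E"
  proof
    assume "{} \<in> E"
    moreover obtain f where "f \<in> E" "f \<noteq> {}"
      using assms(3) \<open>{} \<in> E\<close> by blast
    ultimately have "min (card ({} - f)) (card (f - {})) = 1"
      using assms(2) unfolding one_sperner_def by blast
    then show False by simp
  qed
  have "lin_indep_family (\<Union>e\<in>E. e) E (\<lambda>e x. char_vec e x + 0)"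
    by (rule lin_indep_shifted_char_vecs)
      (use \<open>finite E\<close> finite_edge \<open>{} \<notin> E\<close> assms(2) in \<open>auto simp: one_sperner_iff_one_sperner_on\<close>)
  then have "lin_indep_family (\<Union>E) E char_vec"
    by simp
  then show ?thesis
    by (rule lin_indep_family_mono) (use edges_in_V in blast)
qed

end
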